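(* Let $d$ be a nonnegative integer and let $P_n(x_1,\dots,x_n)$ be the terms defined by $P_0=1$ and $P_{n+1}=(P_n-x_{n+1})\wedge x_{n+1}$. A co-Heyting algebra $L$ satisfies $\dim L\le d$ if and only if $L$ satisfies the identity $P_{d+1}(x_1,\dots,x_{d+1})=0$ (for all $x_1,\dots,x_{d+1}\in L$).
   Context: A co-Heyting algebra is a bounded distributive lattice $(L,0,1,\vee,\wedge)$ such that $a-b=\min\{c\in L: a\le b\vee c\}$ exists for all $a,b$. $\operatorname{Spec}L$ is the set of prime filters ordered by inclusion; the coheight of a prime filter is its cofoundation rank in $\operatorname{Spec}L$ (foundation rank for reverse inclusion: rank $\ge\beta+1$ iff some strictly larger prime filter has rank $\ge\beta$, limits by intersection). $\dim L=\sup\{\operatorname{coheight}\mathfrak p:\mathfrak p\in\operatorname{Spec}L\}$ (the dimension of the element $1$). *)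

theory Defs
  imports Main
begin

definition co_heyting :: "'a::{distrib_lattice,bounded_lattice} itself \<Rightarrow> bool" where
  "co_heyting _ \<longleftrightarrow> (\<forall>a b::'a. \<exists>c. a \<le> sup b c \<and> (\<forall>c'. a \<le> sup b c' \<longrightarrow> c \<le> c'))"

definition cdiff :: "'a::{distrib_lattice,bounded_lattice} \<Rightarrow> 'a \<Rightarrow> 'a" where
  "cdiff a b = (LEAST c. a \<le> sup b c)"

fun Pterm :: "(nat \<Rightarrow> 'a::{distrib_lattice,bounded_lattice}) \<Rightarrow> nat \<Rightarrow> 'a" where
  "Pterm x 0 = top"
| "Pterm x (Suc n) = inf (cdiff (Pterm x n) (x (Suc n))) (x (Suc n))"

definition prime_filter :: "'a::{distrib_lattice,bounded_lattice} set \<Rightarrow> bool" where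
  "prime_filter F \<longleftrightarrow> top \<in> F \<and> bot \<notin> F
     \<and> (\<forall>a b. a \<in> F \<longrightarrow> a \<le> b \<longrightarrow> b \<in> F)
     \<and> (\<forall>a b. a \<in> F \<longrightarrow> b \<in> F \<longrightarrow> inf a b \<in> F)
     \<and> (\<forall>a b. sup a b \<in> F \<longrightarrow> a \<in> F \<or> b \<in> F)"

text \<open>coheight_ge p n: the coheight (cofoundation rank in Spec L) of p is \<ge> n, for finite n:
  rank \<ge> 0 always; rank \<ge> n+1 iff some strictly larger prime filter has rank \<ge> n.\<close>
fun coheight_ge :: "'a::{distrib_lattice,bounded_lattice} set \<Rightarrow> nat \<Rightarrow> bool" where
  "coheight_ge p 0 = True"
| "coheight_ge p (Suc n) = (\<exists>q. prime_filter q \<and> p \<subset> q \<and> coheight_ge q n)"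

definition dim_le :: "'a::{distrib_lattice,bounded_lattice} itself \<Rightarrow> nat \<Rightarrow> bool" where
  "dim_le _ d \<longleftrightarrow> (\<forall>p::'a set. prime_filter p \<longrightarrow> \<not> coheight_ge p (Suc d))"

end

theory Submission
  imports Defs
begin

text \<open>For a prime filter p of a co-Heyting algebra, a - b \<in> p holds exactly when some prime
  filter q \<subseteq> p contains a but not b: one direction is primality applied to a \<le> b \<squnion> (a - b),
  the other is the prime filter theorem for the ideal of elements below some b \<squnion> e with e \<notin> p.
  Unwinding P_(n+1) = (P_n - x_(n+1)) \<sqinter> x_(n+1), the term P_n is nonzero for suitable
  arguments exactly when Spec L contains a strictly increasing chain of n+1 prime filters,
  i.e. a prime filter of coheight at least n.\<close>

lemma cdiff_le_iff:
  assumes "co_heyting TYPE('a::{distrib_lattice,bounded_lattice})"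
  shows "cdiff (a::'a) b \<le> c \<longleftrightarrow> a \<le> sup b c"
proof -
  obtain m where m: "a \<le> sup b m" "\<And>c. a \<le> sup b c \<Longrightarrow> m \<le> c"
    using assms unfolding co_heyting_def by blast
  have "cdiff a b = m"
    unfolding cdiff_def by (rule Least_equality) (use m in auto)
  then show ?thesis
    using m by (meson order_trans sup_mono order_refl)
qed

lemma le_sup_cdiff:
  assumes "co_heyting TYPE('a::{distrib_lattice,bounded_lattice})"
  shows "(a::'a) \<le> sup b (cdiff a b)"
  using cdiff_le_iff[OF assms] by blast

lemma prime_filter_upward:
  "prime_filter F \<Longrightarrow> a \<in> F \<Longrightarrow> a \<le> b \<Longrightarrow> b \<in> F"
  unfolding prime_filter_def by blast

lemma prime_filter_inf_iff:
  "prime_filter F \<Longrightarrow> inf a b \<in> F \<longleftrightarrow> a \<in> F \<and> b \<in> F"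
  unfolding prime_filter_def by (meson inf_le1 inf_le2)

lemma prime_filter_sup_iff:
  "prime_filter F \<Longrightarrow> sup a b \<in> F \<longleftrightarrow> a \<in> F \<or> b \<in> F"
  unfolding prime_filter_def by (meson sup_ge1 sup_ge2)

lemma cdiff_mem_prime_filter:
  assumes "co_heyting TYPE('a::{distrib_lattice,bounded_lattice})"
    and "prime_filter (p::'a set)" "a \<in> p" "b \<notin> p"
  shows "cdiff a b \<in> p"
  using assms prime_filter_upward prime_filter_sup_iff le_sup_cdiff by metis

definition lattice_filter :: "'a::lattice set \<Rightarrow> bool" where
  "lattice_filter F \<longleftrightarrow> F \<noteq> {} \<and> (\<forall>a b. a \<in> F \<longrightarrow> a \<le> b \<longrightarrow> b \<in> F)
     \<and> (\<forall>a b. a \<in> F \<longrightarrow> b \<in> F \<longrightarrow> inf a b \<in> F)"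

definition lattice_ideal :: "'a::lattice set \<Rightarrow> bool" where
  "lattice_ideal J \<longleftrightarrow> J \<noteq> {} \<and> (\<forall>a b. a \<in> J \<longrightarrow> b \<le> a \<longrightarrow> b \<in> J)
     \<and> (\<forall>a b. a \<in> J \<longrightarrow> b \<in> J \<longrightarrow> sup a b \<in> J)"

lemma lattice_filter_Union_chain:
  assumes "C \<noteq> {}" "subset.chain {F. lattice_filter F} C"
  shows "lattice_filter (\<Union>C)"
  unfolding lattice_filter_def
proof (intro conjI allI impI)
  have filters: "\<And>F. F \<in> C \<Longrightarrow> lattice_filter F"
    using assms(2) unfolding subset.chain_def by blast
  show "\<Union>C \<noteq> {}"
    using assms(1) filters unfolding lattice_filter_def by blast
  fix a b
  show "a \<in> \<Union>C \<Longrightarrow> a \<le> b \<Longrightarrow> b \<in> \<Union>C"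
    using filters unfolding lattice_filter_def by blast
  assume "a \<in> \<Union>C" "b \<in> \<Union>C"
  then obtain A B where "A \<in> C" "B \<in> C" "a \<in> A" "b \<in> B" by blast
  moreover have "A \<subseteq> B \<or> B \<subseteq> A"
    using assms(2) \<open>A \<in> C\<close> \<open>B \<in> C\<close> unfolding subset.chain_def by blast
  ultimately show "inf a b \<in> \<Union>C"
    using filters unfolding lattice_filter_def by blast
qed

lemma ex_maximal_filter_disjoint:
  assumes J: "lattice_ideal J" and "a \<notin> J"
  shows "\<exists>M. lattice_filter M \<and> a \<in> M \<and> M \<inter> J = {}
           \<and> (\<forall>F. lattice_filter F \<longrightarrow> M \<subseteq> F \<longrightarrow> F \<inter> J = {} \<longrightarrow> F = M)"
proof -
  define A where "A = {F. lattice_filter F \<and> a \<in> F \<and> F \<inter> J = {}}"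
  have "{b. a \<le> b} \<in> A"
    using assms unfolding A_def lattice_filter_def lattice_ideal_def
    by (auto intro: order_trans le_infI)
  moreover have "\<Union>C \<in> A" if C: "C \<noteq> {}" "subset.chain A C" for C
  proof -
    have "C \<subseteq> A"
      using C(2) unfolding subset.chain_def by blast
    moreover have "subset.chain {F. lattice_filter F} C"
      using C(2) calculation unfolding subset.chain_def A_def by blast
    ultimately show ?thesis
      using C(1) lattice_filter_Union_chain unfolding A_def by blast
  qed
  ultimately obtain M where "M \<in> A" "\<forall>F\<in>A. M \<subseteq> F \<longrightarrow> F = M"
    using subset_Zorn_nonempty[of A] by blast
  then show ?thesis
    unfolding A_def by blast
qed

lemma lattice_filter_adjoin:
  assumes M: "lattice_filter M"
  shows "lattice_filter {b. \<exists>f\<in>M. inf f c \<le> b}" (is "lattice_filter ?N")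
  unfolding lattice_filter_def
proof (intro conjI allI impI)
  show "?N \<noteq> {}"
    using M unfolding lattice_filter_def by blast
  fix a b
  show "a \<in> ?N \<Longrightarrow> a \<le> b \<Longrightarrow> b \<in> ?N"
    by (blast intro: order_trans)
  assume "a \<in> ?N" "b \<in> ?N"
  then obtain f g where fg: "f \<in> M" "g \<in> M" "inf f c \<le> a" "inf g c \<le> b"
    by blast
  have "inf (inf f g) c \<le> inf a b"
    using fg(3,4) by (meson inf_le1 inf_le2 le_inf_iff order_trans)
  moreover have "inf f g \<in> M"
    using M fg(1,2) unfolding lattice_filter_def by blast
  ultimately show "inf a b \<in> ?N"
    by blast
qed

lemma maximal_disjoint_filter_is_prime:
  fixes M :: "'a::{distrib_lattice,bounded_lattice} set"
  assumes J: "lattice_ideal J" and M: "lattice_filter M" "M \<inter> J = {}"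
    and maximal: "\<And>F. lattice_filter F \<Longrightarrow> M \<subseteq> F \<Longrightarrow> F \<inter> J = {} \<Longrightarrow> F = M"
  shows "prime_filter M"
proof -
  have J_down: "\<And>a b. a \<in> J \<Longrightarrow> b \<le> a \<Longrightarrow> b \<in> J"
    and J_sup: "\<And>a b. a \<in> J \<Longrightarrow> b \<in> J \<Longrightarrow> sup a b \<in> J"
    and "J \<noteq> {}"
    using J unfolding lattice_ideal_def by blast+
  have M_up: "\<And>a b. a \<in> M \<Longrightarrow> a \<le> b \<Longrightarrow> b \<in> M"
    and M_inf: "\<And>a b. a \<in> M \<Longrightarrow> b \<in> M \<Longrightarrow> inf a b \<in> M"
    and "M \<noteq> {}"
    using M(1) unfolding lattice_filter_def by blast+
  have witness: "\<exists>f\<in>M. inf f c \<in> J" if "c \<notin> M" for c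
  proof (rule ccontr)
    assume "\<not> (\<exists>f\<in>M. inf f c \<in> J)"
    then have "{b. \<exists>f\<in>M. inf f c \<le> b} \<inter> J = {}"
      using J_down by blast
    moreover have "M \<subseteq> {b. \<exists>f\<in>M. inf f c \<le> b}" "c \<in> {b. \<exists>f\<in>M. inf f c \<le> b}"
      using \<open>M \<noteq> {}\<close> inf_le1 inf_le2 by blast+
    ultimately show False
      using maximal[OF lattice_filter_adjoin[OF M(1)]] that by blast
  qed
  have "c \<in> M \<or> d \<in> M" if cd: "sup c d \<in> M" for c d
  proof (rule ccontr)
    assume "\<not> (c \<in> M \<or> d \<in> M)"
    then obtain f g where fg: "f \<in> M" "inf f c \<in> J" "g \<in> M" "inf g d \<in> J"
      using witness by blast
    have "inf (inf f g) (sup c d) \<le> sup (inf f c) (inf g d)"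
      unfolding inf_sup_distrib1 by (rule sup_mono) (auto intro: le_infI1 le_infI2)
    then have "inf (inf f g) (sup c d) \<in> J"
      using J_down J_sup fg(2,4) by blast
    moreover have "inf (inf f g) (sup c d) \<in> M"
      using M_inf fg(1,3) cd by blast
    ultimately show False
      using M(2) by blast
  qed
  moreover have "top \<in> M"
    using \<open>M \<noteq> {}\<close> M_up top_greatest by blast
  moreover have "bot \<notin> M"
    using \<open>J \<noteq> {}\<close> J_down M(2) bot_least by blast
  ultimately show ?thesis
    unfolding prime_filter_def using M_up M_inf by blast
qed

lemma prime_filter_separation:
  fixes J :: "'a::{distrib_lattice,bounded_lattice} set"
  assumes "lattice_ideal J" "a \<notin> J"
  shows "\<exists>F. prime_filter F \<and> a \<in> F \<and> F \<inter> J = {}"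
  using ex_maximal_filter_disjoint[OF assms] maximal_disjoint_filter_is_prime[OF assms(1)]
  by blast

lemma ex_prime_filter_mem:
  assumes "(a::'a::{distrib_lattice,bounded_lattice}) \<noteq> bot"
  shows "\<exists>F. prime_filter F \<and> a \<in> F"
  using prime_filter_separation[of "{bot}" a] assms
  unfolding lattice_ideal_def by (auto simp: bot_unique)

lemma ex_prime_filter_below_cdiff:
  assumes ch: "co_heyting TYPE('a::{distrib_lattice,bounded_lattice})"
    and p: "prime_filter (p::'a set)" and "cdiff a b \<in> p"
  shows "\<exists>q. prime_filter q \<and> q \<subseteq> p \<and> a \<in> q \<and> b \<notin> q"
proof -
  define J where "J = {c. \<exists>e. e \<notin> p \<and> c \<le> sup b e}"
  have bot_notin: "bot \<notin> p"
    using p unfolding prime_filter_def by blast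
  have "sup c d \<in> J" if cd: "c \<in> J" "d \<in> J" for c d
  proof -
    obtain e e' where "e \<notin> p" "c \<le> sup b e" "e' \<notin> p" "d \<le> sup b e'"
      using cd unfolding J_def by blast
    moreover have "sup c d \<le> sup b (sup e e')"
      using calculation by (meson le_supI order_trans sup_mono sup_ge1 sup_ge2 order_refl)
    ultimately show ?thesis
      using prime_filter_sup_iff[OF p] unfolding J_def by blast
  qed
  then have "lattice_ideal J"
    unfolding lattice_ideal_def J_def using bot_notin by (auto intro: order_trans)
  moreover have "a \<notin> J"
    using assms prime_filter_upward cdiff_le_iff unfolding J_def by blast
  ultimately obtain q where q: "prime_filter q" "a \<in> q" "q \<inter> J = {}"
    using prime_filter_separation by blast
  moreover have "b \<in> J" "\<And>c. c \<notin> p \<Longrightarrow> c \<in> J"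
    unfolding J_def using bot_notin by auto
  ultimately show ?thesis
    by blast
qed

lemma Pterm_fun_upd_beyond:
  "n < k \<Longrightarrow> Pterm (x(k := a)) n = Pterm x n"
  by (induction n) auto

lemma Pterm_mem_imp_coheight_ge:
  assumes ch: "co_heyting TYPE('a::{distrib_lattice,bounded_lattice})"
  shows "prime_filter (p::'a set) \<Longrightarrow> coheight_ge p k \<Longrightarrow> Pterm x n \<in> p
     \<Longrightarrow> \<exists>q::'a set. prime_filter q \<and> coheight_ge q (n + k)"
proof (induction n arbitrary: p k)
  case 0
  then show ?case by auto
next
  case (Suc n)
  have "cdiff (Pterm x n) (x (Suc n)) \<in> p" "x (Suc n) \<in> p"
    using Suc.prems prime_filter_inf_iff by auto
  then obtain q where q: "prime_filter q" "q \<subset> p" "Pterm x n \<in> q"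
    using ex_prime_filter_below_cdiff[OF ch \<open>prime_filter p\<close>] by blast
  then have "coheight_ge q (Suc k)"
    using Suc.prems by auto
  then show ?case
    using Suc.IH[OF q(1) _ q(3)] by (simp only: add_Suc_shift)
qed

lemma coheight_ge_imp_Pterm_nonzero:
  assumes ch: "co_heyting TYPE('a::{distrib_lattice,bounded_lattice})"
  shows "prime_filter (p::'a set) \<Longrightarrow> coheight_ge p n \<Longrightarrow> Pterm x m \<in> p
     \<Longrightarrow> \<exists>y::nat \<Rightarrow> 'a. Pterm y (m + n) \<noteq> bot"
proof (induction n arbitrary: p m x)
  case 0
  then have "Pterm x m \<noteq> bot"
    unfolding prime_filter_def by auto
  then show ?case
    by auto
next
  case (Suc n)
  then obtain q a where q: "prime_filter q" "p \<subset> q" "coheight_ge q n" and a: "a \<in> q" "a \<notin> p"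
    by auto
  have "Pterm (x(Suc m := a)) (Suc m) = inf (cdiff (Pterm x m) a) a"
    by (simp add: Pterm_fun_upd_beyond)
  moreover have "cdiff (Pterm x m) a \<in> q"
    using cdiff_mem_prime_filter[OF ch \<open>prime_filter p\<close> \<open>Pterm x m \<in> p\<close> a(2)] q(2) by blast
  ultimately have "Pterm (x(Suc m := a)) (Suc m) \<in> q"
    using a(1) prime_filter_inf_iff[OF q(1)] by simp
  then show ?case
    using Suc.IH[OF q(1) q(3)] by (metis add_Suc_shift)
qed

lemma ex_coheight_ge_iff_ex_Pterm_nonzero:
  assumes ch: "co_heyting TYPE('a::{distrib_lattice,bounded_lattice})"
  shows "(\<exists>p::'a set. prime_filter p \<and> coheight_ge p n) \<longleftrightarrow> (\<exists>x::nat \<Rightarrow> 'a. Pterm x n \<noteq> bot)"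
proof
  assume "\<exists>p::'a set. prime_filter p \<and> coheight_ge p n"
  then show "\<exists>x::nat \<Rightarrow> 'a. Pterm x n \<noteq> bot"
    using coheight_ge_imp_Pterm_nonzero[OF ch, of _ n "\<lambda>_. top" 0]
    unfolding prime_filter_def by auto
next
  assume "\<exists>x::nat \<Rightarrow> 'a. Pterm x n \<noteq> bot"
  then show "\<exists>p::'a set. prime_filter p \<and> coheight_ge p n"
    using ex_prime_filter_mem Pterm_mem_imp_coheight_ge[OF ch, of _ 0] by fastforce
qed

theorem proposition3p12:
  fixes d :: nat
  assumes "co_heyting TYPE('a::{distrib_lattice,bounded_lattice})"
  shows "dim_le TYPE('a) d \<longleftrightarrow> (\<forall>x :: nat \<Rightarrow> 'a. Pterm x (Suc d) = bot)"
  using ex_coheight_ge_iff_ex_Pterm_nonzero[OF assms, of "Suc d"]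
  unfolding dim_le_def by blast

end
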